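(* Let $T>0$, $M>0$ and $\varepsilon\in(\varepsilon_j)_{j\in\mathbb N}$ be such that $\|u_{0\varepsilon}-\varepsilon\|_{\Phi,\infty}<\infty$. Then any solution $u_\varepsilon$ of the regularized problem which satisfies $\int_\Omega|\nabla u_\varepsilon(t)|^2\le M$ for all $t\in[0,T]$ fulfils $$\|u_\varepsilon(t)-\varepsilon\|_{\Phi,\infty}\le\max\{M,\|u_{0\varepsilon}-\varepsilon\|_{\Phi,\infty}\}\quad\text{for } t\in[0,T].$$
   Context: $\Omega\subset\mathbb{R}^N$ is a bounded smooth domain; $\Phi$ solves $-\Delta\Phi=1$ in $\Omega$, $\Phi=0$ on $\partial\Omega$, and $\|v\|_{\Phi,\infty}:=\operatorname{ess\,sup}_\Omega|v/\Phi|$. $(\varepsilon_j)\subset(0,1)$ decreases to $0$; $\rho_\varepsilon(z):=\min\{z,1/\varepsilon\}$; $(u_{0\varepsilon})_{\varepsilon\in(\varepsilon_j)}\subset C^3(\bar\Omega)$ with $u_{0\varepsilon}\ge\varepsilon$ in $\Omega$, $u_{0\varepsilon}=\varepsilon$ and $\Delta u_{0\varepsilon}=-\int_\Omega|\nabla u_{0\varepsilon}|^2$ on $\partial\Omega$. The regularized problem is $u_{\varepsilon t}=u_\varepsilon\Delta u_\varepsilon+u_\varepsilon\rho_\varepsilon(\int_\Omega|\nabla u_\varepsilon|^2)$ in $\Omega\times(0,\infty)$, $u_\varepsilon=\varepsilon$ on $\partial\Omega$, $u_\varepsilon(\cdot,0)=u_{0\varepsilon}$, with classical solutions in $C^{2,1}(\bar\Omega\times[0,\infty))$.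 *)

theory Defs
  imports "HOL-Analysis.Analysis" "HOL-Probability.Essential_Supremum"
begin

text \<open>Functions on R^N are modelled as real ^ 'n => real (N = CARD('n)).\<close>

definition pd :: "'n::finite \<Rightarrow> (real^'n \<Rightarrow> real) \<Rightarrow> real^'n \<Rightarrow> real" where
  "pd i f x = deriv (\<lambda>s. f (x + s *\<^sub>R axis i 1)) 0"

fun dd :: "'n::finite list \<Rightarrow> (real^'n \<Rightarrow> real) \<Rightarrow> real^'n \<Rightarrow> real" where
  "dd [] f = f"
| "dd (i # is) f = pd i (dd is f)"

definition Ck :: "nat \<Rightarrow> (real^'n::finite) set \<Rightarrow> (real^'n \<Rightarrow> real) \<Rightarrow> bool" where
  "Ck k U f \<longleftrightarrow>
     (\<forall>is. length is < k \<longrightarrow> (\<forall>i. \<forall>x\<in>U. (\<lambda>s. dd is f (x + s *\<^sub>R axis i 1)) differentiable (at 0)))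
   \<and> (\<forall>is. length is \<le> k \<longrightarrow> continuous_on U (dd is f))"

definition Ck_bar :: "nat \<Rightarrow> (real^'n::finite) set \<Rightarrow> (real^'n \<Rightarrow> real) \<Rightarrow> bool" where
  "Ck_bar k \<Omega> f \<longleftrightarrow> Ck k \<Omega> f \<and>
     (\<forall>is. length is \<le> k \<longrightarrow> (\<exists>h. continuous_on (closure \<Omega>) h \<and> (\<forall>x\<in>\<Omega>. h x = dd is f x)))"

definition smooth_on :: "(real^'n::finite) set \<Rightarrow> (real^'n \<Rightarrow> real) \<Rightarrow> bool" where
  "smooth_on U f \<longleftrightarrow> (\<forall>k. Ck k U f)"

definition grad :: "(real^'n::finite \<Rightarrow> real) \<Rightarrow> real^'n \<Rightarrow> real^'n" where
  "grad f x = (\<chi> i. pd i f x)"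

definition lap :: "(real^'n::finite \<Rightarrow> real) \<Rightarrow> real^'n \<Rightarrow> real" where
  "lap f x = (\<Sum>i\<in>UNIV. dd [i, i] f x)"

definition dirichlet :: "(real^'n::finite) set \<Rightarrow> (real^'n \<Rightarrow> real) \<Rightarrow> real" where
  "dirichlet \<Omega> f = integral \<Omega> (\<lambda>x. (norm (grad f x))\<^sup>2)"

definition smooth_bounded_domain :: "(real^'n::finite) set \<Rightarrow> bool" where
  "smooth_bounded_domain \<Omega> \<longleftrightarrow> open \<Omega> \<and> connected \<Omega> \<and> bounded \<Omega> \<and> \<Omega> \<noteq> {} \<and>
     (\<forall>p\<in>frontier \<Omega>. \<exists>U g. open U \<and> p \<in> U \<and> smooth_on U g \<and>
        (\<forall>x\<in>U. grad g x \<noteq> 0) \<and> \<Omega> \<inter> U = {x\<in>U. g x < 0})"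

definition torsion_function :: "(real^'n::finite) set \<Rightarrow> (real^'n \<Rightarrow> real) \<Rightarrow> bool" where
  "torsion_function \<Omega> \<Phi> \<longleftrightarrow> Ck 2 \<Omega> \<Phi> \<and> continuous_on (closure \<Omega>) \<Phi> \<and>
     (\<forall>x\<in>\<Omega>. - lap \<Phi> x = 1) \<and> (\<forall>x\<in>frontier \<Omega>. \<Phi> x = 0)"

definition phi_norm :: "(real^'n::finite) set \<Rightarrow> (real^'n \<Rightarrow> real) \<Rightarrow> (real^'n \<Rightarrow> real) \<Rightarrow> ereal" where
  "phi_norm \<Omega> \<Phi> v = esssup (lebesgue_on \<Omega>) (\<lambda>x. ereal \<bar>v x / \<Phi> x\<bar>)"

definition rho :: "real \<Rightarrow> real \<Rightarrow> real" where
  "rho \<epsilon> z = min z (1 / \<epsilon>)"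

definition C21_bar :: "(real^'n::finite) set \<Rightarrow> (real^'n \<Rightarrow> real \<Rightarrow> real) \<Rightarrow> bool" where
  "C21_bar \<Omega> u \<longleftrightarrow>
     continuous_on (closure \<Omega> \<times> {0..}) (\<lambda>(x, t). u x t) \<and>
     (\<forall>t\<ge>0. Ck 2 \<Omega> (\<lambda>x. u x t)) \<and>
     (\<forall>is. length is \<le> 2 \<longrightarrow> (\<exists>h. continuous_on (closure \<Omega> \<times> {0..}) h \<and>
         (\<forall>x\<in>\<Omega>. \<forall>t\<ge>0. h (x, t) = dd is (\<lambda>y. u y t) x))) \<and>
     (\<exists>h. continuous_on (closure \<Omega> \<times> {0..}) h \<and>
         (\<forall>x\<in>\<Omega>. \<forall>t>0. ((\<lambda>s. u x s) has_real_derivative h (x, t)) (at t)))"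

definition admissible_initial :: "(real^'n::finite) set \<Rightarrow> real \<Rightarrow> (real^'n \<Rightarrow> real) \<Rightarrow> bool" where
  "admissible_initial \<Omega> \<epsilon> u0 \<longleftrightarrow> Ck_bar 3 \<Omega> u0 \<and> continuous_on (closure \<Omega>) u0 \<and>
     (\<forall>x\<in>\<Omega>. u0 x \<ge> \<epsilon>) \<and> (\<forall>x\<in>frontier \<Omega>. u0 x = \<epsilon>) \<and>
     (\<forall>x\<in>frontier \<Omega>. ((lap u0) \<longlongrightarrow> - dirichlet \<Omega> u0) (at x within \<Omega>))"

definition reg_solution :: "(real^'n::finite) set \<Rightarrow> real \<Rightarrow> (real^'n \<Rightarrow> real) \<Rightarrow> (real^'n \<Rightarrow> real \<Rightarrow> real) \<Rightarrow> bool" where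
  "reg_solution \<Omega> \<epsilon> u0 u \<longleftrightarrow> C21_bar \<Omega> u \<and>
     (\<forall>x\<in>\<Omega>. \<forall>t>0. ((\<lambda>s. u x s) has_real_derivative
         (u x t * lap (\<lambda>y. u y t) x + u x t * rho \<epsilon> (dirichlet \<Omega> (\<lambda>y. u y t)))) (at t)) \<and>
     (\<forall>x\<in>frontier \<Omega>. \<forall>t\<ge>0. u x t = \<epsilon>) \<and>
     (\<forall>x\<in>closure \<Omega>. u x 0 = u0 x)"

end

theory Submission
  imports Defs
begin

(*
  Comparison with barriers at a first touching time. The torsion function Phi is positive in the
  domain, since at an interior minimum its Laplacian would be nonnegative. With
  L = max {M, the Phi-weighted norm of u0 - eps}, the functions eps - delta (1 + t) and
  eps + L Phi + delta (1 + t) are strict barriers for u: where u first touches the upper one, at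
  an interior point, Lap u <= L Lap Phi = -L <= -rho (energy), so u_t = u (Lap u + rho) <= 0,
  whereas touching from below forces u_t >= delta; the lower barrier is handled symmetrically.
  Letting delta tend to 0 gives 0 <= u - eps <= L Phi. Because u - eps and Phi are continuous
  and an open Lebesgue null set is empty, such pointwise bounds are equivalent to bounds on the
  essential supremum of |u - eps| / Phi.
*)

section \<open>Second derivatives at interior maxima\<close>

lemma local_max_second_derivative_nonpos:
  fixes g g' :: "real \<Rightarrow> real"
  assumes r: "r > 0"
    and g: "\<And>s. \<bar>s\<bar> < r \<Longrightarrow> (g has_real_derivative g' s) (at s)"
    and g': "(g' has_real_derivative d) (at 0)"
    and max: "\<And>s. \<bar>s\<bar> < r \<Longrightarrow> g s \<le> g 0"
  shows "d \<le> 0"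
proof (rule ccontr)
  assume "\<not> d \<le> 0"
  then obtain e where e: "e > 0" "\<And>h. h > 0 \<Longrightarrow> h < e \<Longrightarrow> g' 0 < g' h"
    using DERIV_pos_inc_right[OF g'] by force
  have g'0: "g' 0 = 0"
    using DERIV_local_max[OF g[of 0] r] r max by auto
  define h where "h = min e r / 2"
  have h: "0 < h" "h < e" "h < r"
    using e r by (auto simp: h_def)
  obtain z where z: "0 < z" "z < h" "g h - g 0 = h * g' z"
    using MVT2[of 0 h g g'] h g by auto
  have "g' z > 0"
    using e(2)[of z] z h g'0 by auto
  with z h have "g h - g 0 > 0"
    by simp
  with max[of h] h show False
    by simp
qed

lemma Ck2_axis_derivatives:
  fixes F :: "real^'n::finite \<Rightarrow> real"
  assumes F: "Ck 2 \<Omega> F" and "open \<Omega>" and x: "x \<in> \<Omega>"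
  obtains r where "r > 0"
    and "\<And>s. \<bar>s\<bar> < r \<Longrightarrow> x + s *\<^sub>R axis i 1 \<in> \<Omega>"
    and "\<And>s. \<bar>s\<bar> < r \<Longrightarrow>
           ((\<lambda>s. F (x + s *\<^sub>R axis i 1)) has_real_derivative pd i F (x + s *\<^sub>R axis i 1)) (at s)"
    and "((\<lambda>s. pd i F (x + s *\<^sub>R axis i 1)) has_real_derivative dd [i, i] F x) (at 0)"
proof -
  obtain r where r: "r > 0" "ball x r \<subseteq> \<Omega>"
    using \<open>open \<Omega>\<close> x open_contains_ball by blast
  have line: "x + s *\<^sub>R axis i 1 \<in> \<Omega>" if "\<bar>s\<bar> < r" for s
    using r that by (auto simp: dist_norm intro!: subsetD[OF r(2)])
  have diff: "(\<lambda>s. dd is F (y + s *\<^sub>R axis i 1)) differentiable (at 0)"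
    if "length is < 2" "y \<in> \<Omega>" for "is" y
    using F that unfolding Ck_def by blast
  have diff0: "\<And>y. y \<in> \<Omega> \<Longrightarrow> (\<lambda>s. F (y + s *\<^sub>R axis i 1)) differentiable (at 0)"
    using diff[of "[]"] by simp
  have diff1: "(\<lambda>s. pd i F (x + s *\<^sub>R axis i 1)) differentiable (at 0)"
    using diff[of "[i]" x] x by simp
  have "((\<lambda>s. F (x + s *\<^sub>R axis i 1)) has_real_derivative pd i F (x + s *\<^sub>R axis i 1)) (at s)"
    if "\<bar>s\<bar> < r" for s
  proof -
    let ?y = "x + s *\<^sub>R axis i 1"
    have "((\<lambda>t. F (?y + t *\<^sub>R axis i 1)) has_real_derivative pd i F ?y) (at 0)"
      unfolding pd_def using diff0[OF line[OF that]] DERIV_deriv_iff_real_differentiable by blast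
    moreover have "(\<lambda>t. F (?y + t *\<^sub>R axis i 1)) = (\<lambda>t. F (x + (t + s) *\<^sub>R axis i 1))"
      by (simp add: algebra_simps)
    ultimately show ?thesis
      using DERIV_shift[of "\<lambda>s. F (x + s *\<^sub>R axis i 1)" "pd i F ?y" 0 s] by simp
  qed
  moreover have "((\<lambda>s. pd i F (x + s *\<^sub>R axis i 1)) has_real_derivative dd [i, i] F x) (at 0)"
    using diff1 DERIV_deriv_iff_real_differentiable by (fastforce simp: pd_def[of i "pd i F"])
  ultimately show thesis
    using that r(1) line by blast
qed

(* A linear combination avoids having to show that lap is linear on Ck 2 functions. *)
lemma lap_combination_nonpos_at_max:
  fixes F G :: "real^'n::finite \<Rightarrow> real"
  assumes F: "Ck 2 \<Omega> F" and G: "Ck 2 \<Omega> G" and "open \<Omega>" and x: "x \<in> \<Omega>"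
    and max: "\<And>y. y \<in> \<Omega> \<Longrightarrow> a * F y + b * G y \<le> a * F x + b * G x"
  shows "a * lap F x + b * lap G x \<le> 0"
proof -
  have "a * dd [i, i] F x + b * dd [i, i] G x \<le> 0" for i
  proof -
    obtain r1 where r1: "r1 > 0" "\<And>s. \<bar>s\<bar> < r1 \<Longrightarrow> x + s *\<^sub>R axis i 1 \<in> \<Omega>"
      "\<And>s. \<bar>s\<bar> < r1 \<Longrightarrow>
         ((\<lambda>s. F (x + s *\<^sub>R axis i 1)) has_real_derivative pd i F (x + s *\<^sub>R axis i 1)) (at s)"
      "((\<lambda>s. pd i F (x + s *\<^sub>R axis i 1)) has_real_derivative dd [i, i] F x) (at 0)"
      using Ck2_axis_derivatives[OF F \<open>open \<Omega>\<close> x] by metis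
    obtain r2 where r2: "r2 > 0"
      "\<And>s. \<bar>s\<bar> < r2 \<Longrightarrow>
         ((\<lambda>s. G (x + s *\<^sub>R axis i 1)) has_real_derivative pd i G (x + s *\<^sub>R axis i 1)) (at s)"
      "((\<lambda>s. pd i G (x + s *\<^sub>R axis i 1)) has_real_derivative dd [i, i] G x) (at 0)"
      using Ck2_axis_derivatives[OF G \<open>open \<Omega>\<close> x] by metis
    have "min r1 r2 > 0"
      using r1 r2 by simp
    then show ?thesis
    proof (rule local_max_second_derivative_nonpos
        [where g = "\<lambda>s. a * F (x + s *\<^sub>R axis i 1) + b * G (x + s *\<^sub>R axis i 1)"
           and g' = "\<lambda>s. a * pd i F (x + s *\<^sub>R axis i 1) + b * pd i G (x + s *\<^sub>R axis i 1)"])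
      fix s :: real
      assume s: "\<bar>s\<bar> < min r1 r2"
      then show "((\<lambda>s. a * F (x + s *\<^sub>R axis i 1) + b * G (x + s *\<^sub>R axis i 1)) has_real_derivative
          a * pd i F (x + s *\<^sub>R axis i 1) + b * pd i G (x + s *\<^sub>R axis i 1)) (at s)"
        using r1(3) r2(2) by (auto intro!: derivative_eq_intros)
      from s r1(2) max show "a * F (x + s *\<^sub>R axis i 1) + b * G (x + s *\<^sub>R axis i 1) \<le>
          a * F (x + 0 *\<^sub>R axis i 1) + b * G (x + 0 *\<^sub>R axis i 1)"
        by simp
    next
      show "((\<lambda>s. a * pd i F (x + s *\<^sub>R axis i 1) + b * pd i G (x + s *\<^sub>R axis i 1))
          has_real_derivative a * dd [i, i] F x + b * dd [i, i] G x) (at 0)"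
        using r1(4) r2(3) by (auto intro!: derivative_eq_intros)
    qed
  qed
  then have "(\<Sum>i\<in>UNIV. a * dd [i, i] F x + b * dd [i, i] G x) \<le> 0"
    by (simp add: sum_nonpos)
  then show ?thesis
    by (simp add: lap_def sum.distrib sum_distrib_left)
qed

lemma lap_nonneg_at_min:
  fixes F :: "real^'n::finite \<Rightarrow> real"
  assumes "Ck 2 \<Omega> F" "open \<Omega>" "x \<in> \<Omega>" "\<And>y. y \<in> \<Omega> \<Longrightarrow> F x \<le> F y"
  shows "lap F x \<ge> 0"
  using lap_combination_nonpos_at_max[OF assms(1,1-3), of "-1" 0] assms(4) by simp

section \<open>Positivity of the torsion function\<close>

lemma torsion_function_no_interior_min:
  assumes "open \<Omega>" and \<Phi>: "torsion_function \<Omega> \<Phi>" and x: "x \<in> \<Omega>"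
  shows "\<exists>y\<in>\<Omega>. \<Phi> y < \<Phi> x"
proof (rule ccontr)
  assume "\<not> ?thesis"
  with \<Phi> x \<open>open \<Omega>\<close> have "lap \<Phi> x \<ge> 0"
    by (intro lap_nonneg_at_min[of \<Omega>]) (auto simp: torsion_function_def not_less)
  with \<Phi> x show False
    by (simp add: torsion_function_def)
qed

lemma torsion_function_nonneg:
  assumes "open \<Omega>" "bounded \<Omega>" and \<Phi>: "torsion_function \<Omega> \<Phi>" and x: "x \<in> closure \<Omega>"
  shows "\<Phi> x \<ge> 0"
proof -
  have "closure \<Omega> \<noteq> {}"
    using x by auto
  then obtain m where m: "m \<in> closure \<Omega>" "\<And>y. y \<in> closure \<Omega> \<Longrightarrow> \<Phi> m \<le> \<Phi> y"
    using continuous_attains_inf[of "closure \<Omega>" \<Phi>] \<open>bounded \<Omega>\<close> \<Phi>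
    by (auto simp: compact_closure torsion_function_def)
  have "m \<notin> \<Omega>"
    using torsion_function_no_interior_min[OF \<open>open \<Omega>\<close> \<Phi>] m closure_subset
    by (meson not_less subsetD)
  with m(1) have "m \<in> frontier \<Omega>"
    by (simp add: frontier_def interior_open[OF \<open>open \<Omega>\<close>])
  with m(2)[OF x] \<Phi> show ?thesis
    by (simp add: torsion_function_def)
qed

lemma torsion_function_pos:
  assumes "open \<Omega>" "bounded \<Omega>" and \<Phi>: "torsion_function \<Omega> \<Phi>" and x: "x \<in> \<Omega>"
  shows "\<Phi> x > 0"
proof -
  obtain y where "y \<in> \<Omega>" "\<Phi> y < \<Phi> x"
    using torsion_function_no_interior_min[OF \<open>open \<Omega>\<close> \<Phi> x] by blast
  with torsion_function_nonneg[OF assms(1-3), of y] show ?thesis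
    using closure_subset by fastforce
qed

section \<open>A parabolic maximum principle\<close>

lemma continuous_on_time_slice:
  fixes h :: "'a::topological_space \<Rightarrow> 'b::topological_space \<Rightarrow> 'c::topological_space"
  assumes "continuous_on (K \<times> I) (\<lambda>(x, t). h x t)" "x \<in> K"
  shows "continuous_on I (h x)"
  using continuous_on_compose2[OF assms(1), of I "\<lambda>t. (x, t)"] assms(2)
  by (simp add: continuous_on_Pair image_subset_iff)

lemma continuous_on_space_slice:
  fixes h :: "'a::topological_space \<Rightarrow> 'b::topological_space \<Rightarrow> 'c::topological_space"
  assumes "continuous_on (K \<times> I) (\<lambda>(x, t). h x t)" "t \<in> I"
  shows "continuous_on K (\<lambda>x. h x t)"
  using continuous_on_compose2[OF assms(1), of K "\<lambda>x. (x, t)"] assms(2)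
  by (simp add: continuous_on_Pair image_subset_iff)

lemma earliest_nonneg_time:
  fixes h :: "'a::euclidean_space \<Rightarrow> real \<Rightarrow> real"
  assumes "bounded \<Omega>"
    and cont: "continuous_on (closure \<Omega> \<times> {0..T}) (\<lambda>(x, t). h x t)"
    and "x1 \<in> closure \<Omega>" "t1 \<in> {0..T}" "h x1 t1 \<ge> 0"
  obtains x t where "x \<in> closure \<Omega>" "t \<in> {0..T}" "h x t \<ge> 0"
    and "\<And>y s. y \<in> closure \<Omega> \<Longrightarrow> s \<in> {0..T} \<Longrightarrow> h y s \<ge> 0 \<Longrightarrow> t \<le> s"
proof -
  define S where "S = (closure \<Omega> \<times> {0..T}) \<inter> (\<lambda>(x, t). h x t) -` {0..}"
  have "compact (closure \<Omega> \<times> {0..T})"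
    using \<open>bounded \<Omega>\<close> by (simp add: compact_Times compact_closure)
  moreover have "closed S"
    unfolding S_def using cont calculation
    by (intro continuous_closed_preimage) (auto intro: compact_imp_closed)
  ultimately have "compact S"
    unfolding S_def by (metis Int_absorb1 Int_lower1 compact_Int_closed inf_commute)
  moreover have "(x1, t1) \<in> S"
    using assms(3-5) by (simp add: S_def)
  ultimately obtain p where p: "p \<in> S" "\<And>q. q \<in> S \<Longrightarrow> snd p \<le> snd q"
    using continuous_attains_inf[of S snd] continuous_on_snd[OF continuous_on_id] by (metis empty_iff)
  then show thesis
    using that[of "fst p" "snd p"] by (force simp: S_def)
qed

lemma first_touching_point:
  fixes h :: "'a::euclidean_space \<Rightarrow> real \<Rightarrow> real"
  assumes "bounded \<Omega>"
    and cont: "continuous_on (closure \<Omega> \<times> {0..T}) (\<lambda>(x, t). h x t)"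
    and init: "\<And>x. x \<in> closure \<Omega> \<Longrightarrow> h x 0 < 0"
    and bdry: "\<And>x t. x \<in> frontier \<Omega> \<Longrightarrow> t \<in> {0..T} \<Longrightarrow> h x t < 0"
    and "x1 \<in> closure \<Omega>" "t1 \<in> {0..T}" "h x1 t1 \<ge> 0"
  obtains x t where "x \<in> \<Omega>" "t \<in> {0<..T}" "h x t = 0"
    and "\<And>y. y \<in> closure \<Omega> \<Longrightarrow> h y t \<le> 0"
    and "\<And>s. s \<in> {0..<t} \<Longrightarrow> h x s < 0"
proof -
  obtain x t where x: "x \<in> closure \<Omega>" and t: "t \<in> {0..T}" and "h x t \<ge> 0"
    and first: "\<And>y s. y \<in> closure \<Omega> \<Longrightarrow> s \<in> {0..T} \<Longrightarrow> h y s \<ge> 0 \<Longrightarrow> t \<le> s"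
    using earliest_nonneg_time[OF assms(1,2,5-7)] by blast
  have "t \<noteq> 0"
    using init[OF x] \<open>h x t \<ge> 0\<close> by force
  have "x \<notin> frontier \<Omega>"
    using bdry[OF _ t] \<open>h x t \<ge> 0\<close> by force
  with x have "x \<in> \<Omega>"
    by (simp add: frontier_def) (use closure_subset interior_subset in blast)
  moreover have below: "h y t \<le> 0" if y: "y \<in> closure \<Omega>" for y
  proof (rule ccontr)
    assume "\<not> h y t \<le> 0"
    moreover have "continuous_on {0..t} (h y)"
      using continuous_on_time_slice[OF cont y] t by (auto elim: continuous_on_subset)
    moreover have "h y 0 \<le> 0"
      using init[OF y] by simp
    ultimately obtain s where "s \<in> {0..t}" "h y s = 0"
      using IVT'[of "h y" 0 0 t] t by fastforce
    with first[OF y, of s] t \<open>\<not> h y t \<le> 0\<close> show False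
      by auto
  qed
  moreover have "h x s < 0" if "s \<in> {0..<t}" for s
    using first[OF x, of s] that t by force
  moreover have "h x t = 0"
    using below[OF x] \<open>h x t \<ge> 0\<close> by simp
  moreover have "t \<in> {0<..T}"
    using t \<open>t \<noteq> 0\<close> by simp
  ultimately show thesis
    using that by blast
qed

lemma has_real_derivative_nonneg_at_first_zero:
  fixes g :: "real \<Rightarrow> real"
  assumes "(g has_real_derivative D) (at t)" and "t > 0" and "g t = 0"
    and neg: "\<And>s. s \<in> {0..<t} \<Longrightarrow> g s < 0"
  shows "D \<ge> 0"
proof (rule ccontr)
  assume "\<not> D \<ge> 0"
  then obtain e where e: "e > 0" "\<And>h. h > 0 \<Longrightarrow> h < e \<Longrightarrow> g t < g (t - h)"
    using DERIV_neg_dec_left[OF assms(1)] by force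
  define h where "h = min e t / 2"
  have "h > 0" "h < e" "h < t"
    using e \<open>t > 0\<close> by (auto simp: h_def)
  with e(2) neg[of "t - h"] \<open>g t = 0\<close> show False
    by force
qed

lemma parabolic_maximum_principle:
  fixes h :: "'a::euclidean_space \<Rightarrow> real \<Rightarrow> real"
  assumes "bounded \<Omega>"
    and cont: "continuous_on (closure \<Omega> \<times> {0..T}) (\<lambda>(x, t). h x t)"
    and init: "\<And>x. x \<in> closure \<Omega> \<Longrightarrow> h x 0 < 0"
    and bdry: "\<And>x t. x \<in> frontier \<Omega> \<Longrightarrow> t \<in> {0..T} \<Longrightarrow> h x t < 0"
    and touch: "\<And>x t. x \<in> \<Omega> \<Longrightarrow> t \<in> {0<..T} \<Longrightarrow> h x t = 0 \<Longrightarrow>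
                  (\<And>y. y \<in> closure \<Omega> \<Longrightarrow> h y t \<le> 0) \<Longrightarrow>
                  \<exists>D<0. ((\<lambda>s. h x s) has_real_derivative D) (at t)"
    and x: "x \<in> closure \<Omega>" and t: "t \<in> {0..T}"
  shows "h x t < 0"
proof (rule ccontr)
  assume "\<not> h x t < 0"
  then obtain x' t' where x': "x' \<in> \<Omega>" and t': "t' \<in> {0<..T}" and zero: "h x' t' = 0"
    and max: "\<And>y. y \<in> closure \<Omega> \<Longrightarrow> h y t' \<le> 0" and neg: "\<And>s. s \<in> {0..<t'} \<Longrightarrow> h x' s < 0"
    using first_touching_point[OF \<open>bounded \<Omega>\<close> cont init bdry x t] by (metis not_less)
  obtain D where "D < 0" and D: "((\<lambda>s. h x' s) has_real_derivative D) (at t')"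
    using touch[OF x' t' zero max] by blast
  moreover have "D \<ge> 0"
    using has_real_derivative_nonneg_at_first_zero[OF D _ zero neg] t' by simp
  ultimately show False
    by simp
qed

section \<open>Barriers for u_t = u (lap u + r t)\<close>

context
  fixes \<Omega> :: "(real^'n::finite) set" and u :: "real^'n \<Rightarrow> real \<Rightarrow> real"
    and r :: "real \<Rightarrow> real" and e T :: real
  assumes bounded_dom: "bounded \<Omega>" and open_dom: "open \<Omega>"
    and cont: "continuous_on (closure \<Omega> \<times> {0..T}) (\<lambda>(x, t). u x t)"
    and C2: "\<And>t. t \<in> {0..T} \<Longrightarrow> Ck 2 \<Omega> (\<lambda>x. u x t)"
    and pde: "\<And>x t. x \<in> \<Omega> \<Longrightarrow> t \<in> {0<..T} \<Longrightarrow>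
               ((\<lambda>s. u x s) has_real_derivative u x t * (lap (\<lambda>y. u y t) x + r t)) (at t)"
    and bdry: "\<And>x t. x \<in> frontier \<Omega> \<Longrightarrow> t \<in> {0..T} \<Longrightarrow> u x t = e"
begin

lemma rate_nonneg_at_min:
  assumes y: "y \<in> \<Omega>" and s: "s \<in> {0<..T}" and "u y s \<ge> 0" and "r s \<ge> 0"
    and min: "\<And>z. z \<in> \<Omega> \<Longrightarrow> u y s \<le> u z s"
  shows "u y s * (lap (\<lambda>z. u z s) y + r s) \<ge> 0"
proof -
  have "lap (\<lambda>z. u z s) y \<ge> 0"
    using s min by (intro lap_nonneg_at_min[OF C2 open_dom y]) auto
  with assms show ?thesis
    by simp
qed

lemma rate_nonpos_at_torsion_max:
  assumes \<Phi>: "torsion_function \<Omega> \<Phi>" and y: "y \<in> \<Omega>" and s: "s \<in> {0<..T}"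
    and "u y s \<ge> 0" and "r s \<le> L"
    and max: "\<And>z. z \<in> \<Omega> \<Longrightarrow> u z s - L * \<Phi> z \<le> u y s - L * \<Phi> y"
  shows "u y s * (lap (\<lambda>z. u z s) y + r s) \<le> 0"
proof -
  have "1 * lap (\<lambda>z. u z s) y + (- L) * lap \<Phi> y \<le> 0"
    using \<Phi> C2[of s] s max by (intro lap_combination_nonpos_at_max[OF _ _ open_dom y])
      (auto simp: torsion_function_def)
  with y \<Phi> \<open>r s \<le> L\<close> have "lap (\<lambda>z. u z s) y + r s \<le> 0"
    by (simp add: torsion_function_def)
  with \<open>u y s \<ge> 0\<close> show ?thesis
    by (simp add: mult_nonneg_nonpos)
qed

lemma solution_gt_lower_barrier:
  assumes r_nonneg: "\<And>t. t \<in> {0<..T} \<Longrightarrow> r t \<ge> 0"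
    and init: "\<And>x. x \<in> closure \<Omega> \<Longrightarrow> u x 0 \<ge> e"
    and "\<delta> > 0" and "\<delta> * (1 + T) < e" and x: "x \<in> closure \<Omega>" and t: "t \<in> {0..T}"
  shows "e - \<delta> * (1 + t) < u x t"
proof -
  let ?h = "\<lambda>x t. e - \<delta> * (1 + t) - u x t"
  have "?h x t < 0"
  proof (rule parabolic_maximum_principle[OF bounded_dom _ _ _ _ x t])
    have "continuous_on (closure \<Omega> \<times> {0..T}) (\<lambda>p. e - \<delta> * (1 + snd p) - (\<lambda>(x, t). u x t) p)"
      by (intro continuous_intros cont)
    then show "continuous_on (closure \<Omega> \<times> {0..T}) (\<lambda>(x, t). ?h x t)"
      by (simp add: case_prod_beta)
    show "?h y 0 < 0" if "y \<in> closure \<Omega>" for y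
      using init[OF that] \<open>\<delta> > 0\<close> by simp
    show "?h y s < 0" if "y \<in> frontier \<Omega>" "s \<in> {0..T}" for y s
      using bdry[OF that] that \<open>\<delta> > 0\<close> by (simp add: add_pos_nonneg)
  next
    fix y s
    assume y: "y \<in> \<Omega>" and s: "s \<in> {0<..T}" and zero: "?h y s = 0"
      and max: "\<And>z. z \<in> closure \<Omega> \<Longrightarrow> ?h z s \<le> 0"
    have "\<delta> * (1 + s) \<le> \<delta> * (1 + T)"
      using s \<open>\<delta> > 0\<close> by simp
    with zero \<open>\<delta> * (1 + T) < e\<close> have "u y s \<ge> 0"
      by simp
    moreover have "u y s \<le> u z s" if "z \<in> \<Omega>" for z
      using max[of z] zero that closure_subset by force
    ultimately have "u y s * (lap (\<lambda>z. u z s) y + r s) \<ge> 0"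
      using rate_nonneg_at_min[OF y s _ r_nonneg[OF s]] by blast
    moreover have "((\<lambda>s. ?h y s) has_real_derivative - \<delta> - u y s * (lap (\<lambda>z. u z s) y + r s)) (at s)"
      using pde[OF y s] by (auto intro!: derivative_eq_intros)
    ultimately show "\<exists>D<0. ((\<lambda>s. ?h y s) has_real_derivative D) (at s)"
      using \<open>\<delta> > 0\<close> by force
  qed
  then show ?thesis
    by simp
qed

lemma solution_ge_boundary_value:
  assumes "e > 0" and "\<And>t. t \<in> {0<..T} \<Longrightarrow> r t \<ge> 0"
    and "\<And>x. x \<in> closure \<Omega> \<Longrightarrow> u x 0 \<ge> e"
    and x: "x \<in> closure \<Omega>" and t: "t \<in> {0..T}"
  shows "u x t \<ge> e"
proof (rule dense_le_bounded[OF \<open>e > 0\<close>])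
  fix w
  assume "0 < w" "w < e"
  define \<delta> where "\<delta> = (e - w) / (1 + T)"
  have "T \<ge> 0"
    using t by simp
  then have "\<delta> > 0" "\<delta> * (1 + T) = e - w"
    using \<open>w < e\<close> by (simp_all add: \<delta>_def)
  moreover have "\<delta> * (1 + t) \<le> \<delta> * (1 + T)"
    using t \<open>\<delta> > 0\<close> by simp
  ultimately show "w \<le> u x t"
    using solution_gt_lower_barrier[OF assms(2,3) \<open>\<delta> > 0\<close> _ x t] \<open>0 < w\<close> by linarith
qed

lemma solution_lt_torsion_barrier:
  assumes \<Phi>: "torsion_function \<Omega> \<Phi>" and "e \<ge> 0" and "L \<ge> 0"
    and r_le: "\<And>t. t \<in> {0<..T} \<Longrightarrow> r t \<le> L"
    and init: "\<And>x. x \<in> closure \<Omega> \<Longrightarrow> u x 0 - e \<le> L * \<Phi> x"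
    and "\<delta> > 0" and x: "x \<in> closure \<Omega>" and t: "t \<in> {0..T}"
  shows "u x t < e + L * \<Phi> x + \<delta> * (1 + t)"
proof -
  let ?h = "\<lambda>x t. u x t - (e + L * \<Phi> x + \<delta> * (1 + t))"
  have "?h x t < 0"
  proof (rule parabolic_maximum_principle[OF bounded_dom _ _ _ _ x t])
    have "continuous_on (closure \<Omega>) \<Phi>"
      using \<Phi> by (simp add: torsion_function_def)
    then have \<Phi>_fst: "continuous_on (closure \<Omega> \<times> {0..T}) (\<lambda>p. \<Phi> (fst p))"
      by (rule continuous_on_compose2[OF _ continuous_on_fst[OF continuous_on_id]]) auto
    have "continuous_on (closure \<Omega> \<times> {0..T})
        (\<lambda>p. (\<lambda>(x, t). u x t) p - (e + L * \<Phi> (fst p) + \<delta> * (1 + snd p)))"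
      by (intro continuous_intros cont \<Phi>_fst)
    then show "continuous_on (closure \<Omega> \<times> {0..T}) (\<lambda>(x, t). ?h x t)"
      by (simp add: case_prod_beta)
    show "?h y 0 < 0" if "y \<in> closure \<Omega>" for y
      using init[OF that] \<open>\<delta> > 0\<close> by simp
    show "?h y s < 0" if "y \<in> frontier \<Omega>" "s \<in> {0..T}" for y s
      using bdry[OF that] \<Phi> that \<open>\<delta> > 0\<close> by (simp add: torsion_function_def add_pos_nonneg)
  next
    fix y s
    assume y: "y \<in> \<Omega>" and s: "s \<in> {0<..T}" and zero: "?h y s = 0"
      and max: "\<And>z. z \<in> closure \<Omega> \<Longrightarrow> ?h z s \<le> 0"
    have "\<Phi> y \<ge> 0"
      using torsion_function_nonneg[OF open_dom bounded_dom \<Phi>] closure_subset y by blast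
    then have "0 \<le> L * \<Phi> y" "0 < \<delta> * (1 + s)"
      using s \<open>L \<ge> 0\<close> \<open>\<delta> > 0\<close> by auto
    with zero \<open>e \<ge> 0\<close> have "u y s \<ge> 0"
      by linarith
    moreover have "u z s - L * \<Phi> z \<le> u y s - L * \<Phi> y" if "z \<in> \<Omega>" for z
      using max[of z] zero that closure_subset by force
    ultimately have "u y s * (lap (\<lambda>z. u z s) y + r s) \<le> 0"
      using rate_nonpos_at_torsion_max[OF \<Phi> y s _ r_le[OF s]] by blast
    moreover have "((\<lambda>s. ?h y s) has_real_derivative u y s * (lap (\<lambda>z. u z s) y + r s) - \<delta>) (at s)"
      using pde[OF y s] by (auto intro!: derivative_eq_intros)
    ultimately show "\<exists>D<0. ((\<lambda>s. ?h y s) has_real_derivative D) (at s)"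
      using \<open>\<delta> > 0\<close> by force
  qed
  then show ?thesis
    by simp
qed

lemma solution_le_torsion_barrier:
  assumes "torsion_function \<Omega> \<Phi>" "e \<ge> 0" "L \<ge> 0" "\<And>t. t \<in> {0<..T} \<Longrightarrow> r t \<le> L"
    and "\<And>x. x \<in> closure \<Omega> \<Longrightarrow> u x 0 - e \<le> L * \<Phi> x"
    and x: "x \<in> closure \<Omega>" and t: "t \<in> {0..T}"
  shows "u x t - e \<le> L * \<Phi> x"
proof (rule field_le_epsilon)
  fix \<epsilon> :: real
  assume "\<epsilon> > 0"
  with t solution_lt_torsion_barrier[OF assms(1-5) _ x t, of "\<epsilon> / (1 + t)"]
  show "u x t - e \<le> L * \<Phi> x + \<epsilon>"
    by simp
qed

end

section \<open>The weighted norm\<close>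

lemma AE_lebesgue_on_imp_all_open_exception:
  fixes \<Omega> :: "'a::euclidean_space set"
  assumes "open \<Omega>" and ae: "AE x in lebesgue_on \<Omega>. P x" and "open {x \<in> \<Omega>. \<not> P x}"
    and "x \<in> \<Omega>"
  shows "P x"
proof -
  obtain N where N: "{x \<in> \<Omega>. \<not> P x} \<subseteq> N" "N \<in> null_sets (lebesgue_on \<Omega>)"
    using ae by (auto elim!: AE_E simp: null_sets_def)
  then have "N \<in> null_sets lebesgue"
    using null_sets_restrict_space[of \<Omega> lebesgue] \<open>open \<Omega>\<close> by auto
  moreover have "{x \<in> \<Omega>. \<not> P x} \<in> sets lebesgue"
    using \<open>open {x \<in> \<Omega>. \<not> P x}\<close> by simp
  ultimately have "negligible {x \<in> \<Omega>. \<not> P x}"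
    using N(1) null_sets_subset negligible_iff_null_sets by blast
  with \<open>open {x \<in> \<Omega>. \<not> P x}\<close> \<open>x \<in> \<Omega>\<close> show ?thesis
    using open_not_negligible by blast
qed

lemma phi_norm_le_imp_abs_le:
  fixes \<Omega> :: "(real^'n::finite) set"
  assumes "open \<Omega>" and v: "continuous_on \<Omega> v" and \<Phi>: "continuous_on \<Omega> \<Phi>"
    and pos: "\<And>x. x \<in> \<Omega> \<Longrightarrow> \<Phi> x > 0"
    and L: "phi_norm \<Omega> \<Phi> v \<le> ereal L" and x: "x \<in> \<Omega>"
  shows "\<bar>v x\<bar> \<le> L * \<Phi> x"
proof -
  let ?f = "\<lambda>x. \<bar>v x / \<Phi> x\<bar>"
  have "AE x in lebesgue_on \<Omega>. ereal (?f x) \<le> phi_norm \<Omega> \<Phi> v"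
    unfolding phi_norm_def by (rule esssup_AE)
  then have "AE x in lebesgue_on \<Omega>. ?f x \<le> L"
    by eventually_elim (use L in \<open>metis ereal_less_eq(3) order.trans\<close>)
  moreover have "continuous_on \<Omega> ?f"
    by (intro continuous_on_rabs continuous_on_divide v \<Phi>) (use pos in force)
  then have "open (\<Omega> \<inter> ?f -` {L<..})"
    using \<open>open \<Omega>\<close> by (intro continuous_open_preimage) auto
  then have "open {x \<in> \<Omega>. \<not> ?f x \<le> L}"
    by (simp add: Int_def not_le)
  ultimately have "?f x \<le> L"
    using AE_lebesgue_on_imp_all_open_exception[OF \<open>open \<Omega>\<close>] x by blast
  with pos[OF x] show ?thesis
    by (simp add: pos_divide_le_eq)
qed

lemma phi_norm_le_if_abs_le:
  fixes \<Omega> :: "(real^'n::finite) set"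
  assumes "open \<Omega>" and v: "continuous_on \<Omega> v" and \<Phi>: "continuous_on \<Omega> \<Phi>"
    and pos: "\<And>x. x \<in> \<Omega> \<Longrightarrow> \<Phi> x > 0"
    and le: "\<And>x. x \<in> \<Omega> \<Longrightarrow> \<bar>v x\<bar> \<le> L * \<Phi> x"
  shows "phi_norm \<Omega> \<Phi> v \<le> ereal L"
  unfolding phi_norm_def
proof (rule esssup_I)
  have "continuous_on \<Omega> (\<lambda>x. \<bar>v x / \<Phi> x\<bar>)"
    by (intro continuous_on_rabs continuous_on_divide v \<Phi>) (use pos in force)
  then have "(\<lambda>x. \<bar>v x / \<Phi> x\<bar>) \<in> borel_measurable (lebesgue_on \<Omega>)"
    using \<open>open \<Omega>\<close> by (intro continuous_imp_measurable_on_sets_lebesgue) auto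
  then show "(\<lambda>x. ereal \<bar>v x / \<Phi> x\<bar>) \<in> borel_measurable (lebesgue_on \<Omega>)"
    by (rule borel_measurable_ereal)
  show "AE x in lebesgue_on \<Omega>. ereal \<bar>v x / \<Phi> x\<bar> \<le> ereal L"
  proof (rule AE_I2)
    fix x
    assume "x \<in> space (lebesgue_on \<Omega>)"
    then have "x \<in> \<Omega>"
      by simp
    with le[of x] pos[of x] have "\<bar>v x / \<Phi> x\<bar> \<le> L"
      by (simp add: abs_divide pos_divide_le_eq)
    then show "ereal \<bar>v x / \<Phi> x\<bar> \<le> ereal L"
      by simp
  qed
qed

lemma dirichlet_nonneg: "dirichlet \<Omega> f \<ge> 0"
  unfolding dirichlet_def
  by (cases "(\<lambda>x. (norm (grad f x))\<^sup>2) integrable_on \<Omega>") (simp_all add: integral_nonneg not_integrable_integral)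

lemma admissible_initial_torsion_bounds:
  assumes "open \<Omega>" "bounded \<Omega>" and \<Phi>: "torsion_function \<Omega> \<Phi>"
    and u0: "admissible_initial \<Omega> e u0"
    and L: "phi_norm \<Omega> \<Phi> (\<lambda>x. u0 x - e) \<le> ereal L" and x: "x \<in> closure \<Omega>"
  shows "e \<le> u0 x \<and> u0 x - e \<le> L * \<Phi> x"
proof (cases "x \<in> \<Omega>")
  case True
  have "continuous_on \<Omega> u0" and \<Phi>_cont: "continuous_on \<Omega> \<Phi>"
    using u0 \<Phi> continuous_on_subset[OF _ closure_subset]
    by (auto simp: admissible_initial_def torsion_function_def)
  then have "continuous_on \<Omega> (\<lambda>x. u0 x - e)"
    by (intro continuous_on_diff continuous_on_const)
  with \<Phi>_cont have "\<bar>u0 x - e\<bar> \<le> L * \<Phi> x"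
    using phi_norm_le_imp_abs_le[OF \<open>open \<Omega>\<close> _ _ _ L True]
      torsion_function_pos[OF assms(1-3)] by blast
  with u0 True show ?thesis
    by (auto simp: admissible_initial_def)
next
  case False
  with x \<open>open \<Omega>\<close> have "x \<in> frontier \<Omega>"
    by (simp add: frontier_def interior_open)
  with u0 \<Phi> show ?thesis
    by (simp add: admissible_initial_def torsion_function_def)
qed

lemma reg_solution_torsion_bounds:
  assumes "open \<Omega>" "bounded \<Omega>" and \<Phi>: "torsion_function \<Omega> \<Phi>" and "e > 0"
    and u: "reg_solution \<Omega> e u0 u"
    and init: "\<And>x. x \<in> closure \<Omega> \<Longrightarrow> e \<le> u0 x \<and> u0 x - e \<le> L * \<Phi> x"
    and energy: "\<And>t. t \<in> {0..T} \<Longrightarrow> dirichlet \<Omega> (\<lambda>x. u x t) \<le> L"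
    and x: "x \<in> closure \<Omega>" and t: "t \<in> {0..T}"
  shows "e \<le> u x t \<and> u x t - e \<le> L * \<Phi> x"
proof -
  let ?r = "\<lambda>t. rho e (dirichlet \<Omega> (\<lambda>y. u y t))"
  have "continuous_on (closure \<Omega> \<times> {0..}) (\<lambda>(x, t). u x t)"
    using u by (simp add: reg_solution_def C21_bar_def)
  then have cont: "continuous_on (closure \<Omega> \<times> {0..T}) (\<lambda>(x, t). u x t)"
    by (rule continuous_on_subset) auto
  have C2: "\<And>t. t \<in> {0..T} \<Longrightarrow> Ck 2 \<Omega> (\<lambda>x. u x t)"
    using u by (simp add: reg_solution_def C21_bar_def)
  have pde: "\<And>x t. x \<in> \<Omega> \<Longrightarrow> t \<in> {0<..T} \<Longrightarrow>
      ((\<lambda>s. u x s) has_real_derivative u x t * (lap (\<lambda>y. u y t) x + ?r t)) (at t)"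
    using u by (simp add: reg_solution_def distrib_left)
  have bdry: "\<And>x t. x \<in> frontier \<Omega> \<Longrightarrow> t \<in> {0..T} \<Longrightarrow> u x t = e"
    and initial: "\<And>x. x \<in> closure \<Omega> \<Longrightarrow> u x 0 = u0 x"
    using u by (simp_all add: reg_solution_def)
  have "0 \<le> L"
    using dirichlet_nonneg energy[of 0] t by (meson atLeastAtMost_iff order.trans order_refl)
  have "0 \<le> ?r t" "?r t \<le> L" if "t \<in> {0..T}" for t
    using dirichlet_nonneg energy[OF that] \<open>e > 0\<close> by (simp_all add: rho_def)
  with solution_ge_boundary_value[OF assms(2,1) cont C2 pde bdry \<open>e > 0\<close>]
    solution_le_torsion_barrier[OF assms(2,1) cont C2 pde bdry \<Phi> _ \<open>0 \<le> L\<close>]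
    init initial x t \<open>e > 0\<close>
  show ?thesis
    by simp
qed

lemma reg_solution_phi_norm_le:
  assumes "open \<Omega>" "bounded \<Omega>" and \<Phi>: "torsion_function \<Omega> \<Phi>" and "e > 0"
    and u: "reg_solution \<Omega> e u0 u" and u0: "admissible_initial \<Omega> e u0"
    and L: "phi_norm \<Omega> \<Phi> (\<lambda>x. u0 x - e) \<le> ereal L"
    and energy: "\<And>t. t \<in> {0..T} \<Longrightarrow> dirichlet \<Omega> (\<lambda>x. u x t) \<le> L"
    and t: "t \<in> {0..T}"
  shows "phi_norm \<Omega> \<Phi> (\<lambda>x. u x t - e) \<le> ereal L"
proof (rule phi_norm_le_if_abs_le[OF \<open>open \<Omega>\<close>])
  have "continuous_on (closure \<Omega> \<times> {0..}) (\<lambda>(x, t). u x t)"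
    using u by (simp add: reg_solution_def C21_bar_def)
  then have "continuous_on (closure \<Omega>) (\<lambda>x. u x t)"
    by (rule continuous_on_space_slice) (use t in simp)
  then have "continuous_on \<Omega> (\<lambda>x. u x t)"
    using closure_subset by (rule continuous_on_subset)
  then show "continuous_on \<Omega> (\<lambda>x. u x t - e)"
    by (intro continuous_on_diff continuous_on_const)
  show "continuous_on \<Omega> \<Phi>"
    using \<Phi> continuous_on_subset[OF _ closure_subset] by (auto simp: torsion_function_def)
  show "\<And>x. x \<in> \<Omega> \<Longrightarrow> \<Phi> x > 0"
    using torsion_function_pos[OF assms(1-3)] .
  fix x
  assume "x \<in> \<Omega>"
  then have "e \<le> u x t \<and> u x t - e \<le> L * \<Phi> x"
    using closure_subset
    by (intro reg_solution_torsion_bounds[OF assms(1-5) admissible_initial_torsion_bounds[OF assms(1-3) u0 L]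
          energy _ t]) auto
  then show "\<bar>u x t - e\<bar> \<le> L * \<Phi> x"
    by simp
qed

theorem lemma2p7:
  fixes \<Omega> :: "(real^'n::finite) set"
    and \<Phi> :: "real^'n \<Rightarrow> real"
    and eps :: "nat \<Rightarrow> real"
    and u0 :: "real \<Rightarrow> real^'n \<Rightarrow> real"
    and u :: "real^'n \<Rightarrow> real \<Rightarrow> real"
    and T M :: real and j :: nat
  assumes dom: "smooth_bounded_domain \<Omega>"
    and Phi: "torsion_function \<Omega> \<Phi>"
    and eps_range: "\<And>k. eps k \<in> {0<..<1}"
    and eps_dec: "decseq eps"
    and eps_lim: "eps \<longlonglongrightarrow> 0"
    and init: "\<And>k. admissible_initial \<Omega> (eps k) (u0 (eps k))"
    and T: "T > 0" and M: "M > 0"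
    and fin: "phi_norm \<Omega> \<Phi> (\<lambda>x. u0 (eps j) x - eps j) < \<infinity>"
    and sol: "reg_solution \<Omega> (eps j) (u0 (eps j)) u"
    and energy: "\<And>t. t \<in> {0..T} \<Longrightarrow> dirichlet \<Omega> (\<lambda>x. u x t) \<le> M"
  shows "\<forall>t\<in>{0..T}. phi_norm \<Omega> \<Phi> (\<lambda>x. u x t - eps j)
           \<le> max (ereal M) (phi_norm \<Omega> \<Phi> (\<lambda>x. u0 (eps j) x - eps j))"
proof
  fix t
  assume t: "t \<in> {0..T}"
  define L where "L = real_of_ereal (max (ereal M) (phi_norm \<Omega> \<Phi> (\<lambda>x. u0 (eps j) x - eps j)))"
  have L: "ereal L = max (ereal M) (phi_norm \<Omega> \<Phi> (\<lambda>x. u0 (eps j) x - eps j))"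
    unfolding L_def using fin by (cases "phi_norm \<Omega> \<Phi> (\<lambda>x. u0 (eps j) x - eps j)") (auto simp: max_def)
  then have "M \<le> L"
    by (metis ereal_less_eq(3) max.cobounded1)
  have "open \<Omega>" "bounded \<Omega>"
    using dom by (simp_all add: smooth_bounded_domain_def)
  moreover have "eps j > 0"
    using eps_range[of j] by simp
  ultimately have "phi_norm \<Omega> \<Phi> (\<lambda>x. u x t - eps j) \<le> ereal L"
    using reg_solution_phi_norm_le[OF _ _ Phi _ sol init, of L T t] L energy \<open>M \<le> L\<close> t
    by fastforce
  with L show "phi_norm \<Omega> \<Phi> (\<lambda>x. u x t - eps j)
      \<le> max (ereal M) (phi_norm \<Omega> \<Phi> (\<lambda>x. u0 (eps j) x - eps j))"
    by simp
qed

end
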